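(* Let $w\in\mathcal L_n$ have a valid step $q$ in $\mathcal L$. If for some $1\le i<j\le q$ one has $(w^{q\ast2})_{[i,i+n-1]}=(w^{q\ast 2})_{[j,j+n-1]}$, then $j-i$ is a valid step for $w$ in $\mathcal L$. Consequently, if $q$ is the minimal step for $w$, the words $(w^{q\ast 2})_{[i,i+n-1]}$, $1\le i\le q$, are pairwise distinct.
   Context: $\mathcal L$ is a language over a finite alphabet $\mathcal A$ (nonempty finite words, containing $\mathcal A$, closed under subwords, every word extendable on both sides), $\mathcal L_n$ its words of length $n$. For $n\ge 2$, $w\in\mathcal A^n$ and integer $1\le q\le n/2$ with $w_{[q+1,n]}=w_{[1,n-q]}$, $w^{q\ast r}$ is the word of length $n+(r-1)q$ with $(w^{q\ast r})_{[q(i-1)+1,q(i-1)+n]}=w$ for $1\le i\le r$; $q$ is a valid step for $w$ in $\mathcal L$ if moreover $w^{q\ast 2}\in\mathcal L$. The minimal step is the least valid step. *)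

theory Defs
  imports Main
begin

text \<open>Words are lists; positions are 1-based as in the paper.
  factor u a b is the subword u_[a,b] (positions a..b).\<close>

definition factor :: "'a list \<Rightarrow> nat \<Rightarrow> nat \<Rightarrow> 'a list" where
  "factor u a b = take (Suc b - a) (drop (a - 1) u)"

definition is_language :: "'a set \<Rightarrow> 'a list set \<Rightarrow> bool" where
  "is_language A L \<longleftrightarrow>
     finite A \<and> A \<noteq> {} \<and>
     (\<forall>w\<in>L. w \<noteq> [] \<and> set w \<subseteq> A) \<and>
     (\<forall>a\<in>A. [a] \<in> L) \<and>
     (\<forall>u v x. u @ x @ v \<in> L \<longrightarrow> x \<noteq> [] \<longrightarrow> x \<in> L) \<and>
     (\<forall>w\<in>L. \<exists>a\<in>A. \<exists>b\<in>A. a # w @ [b] \<in> L)"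

definition lang_n :: "'a list set \<Rightarrow> nat \<Rightarrow> 'a list set" where
  "lang_n L n = {w \<in> L. length w = n}"

text \<open>w^{q*r}: the word of length n+(r-1)q whose factors at positions
  q(i-1)+1 .. q(i-1)+n equal w, for 1 \<le> i \<le> r (under the overlap condition
  w_[q+1,n] = w_[1,n-q] this is the word below).\<close>

definition qpow :: "'a list \<Rightarrow> nat \<Rightarrow> nat \<Rightarrow> 'a list" where
  "qpow w q r = concat (replicate (r - 1) (take q w)) @ w"

definition valid_step :: "'a list set \<Rightarrow> 'a list \<Rightarrow> nat \<Rightarrow> bool" where
  "valid_step L w q \<longleftrightarrow>
     (let n = length w in
       2 \<le> n \<and> 1 \<le> q \<and> 2 * q \<le> n \<and>
       factor w (q + 1) n = factor w 1 (n - q) \<and>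
       qpow w q 2 \<in> L)"

definition minimal_step :: "'a list set \<Rightarrow> 'a list \<Rightarrow> nat \<Rightarrow> bool" where
  "minimal_step L w q \<longleftrightarrow> valid_step L w q \<and> (\<forall>p<q. \<not> valid_step L w p)"

end

theory Submission
  imports Defs
begin

text \<open>The square W = w^{q*2} has period q. Two equal windows of length n \<ge> q in W,
  j - i positions apart, force every residue class mod q, and hence all of W, to
  have period j - i. Then w, a suffix of W, has period j - i, and w^{(j-i)*2} is
  itself a suffix of W, so it lies in the language.\<close>

definition has_period :: "nat \<Rightarrow> 'a list \<Rightarrow> bool" where
  "has_period p xs \<longleftrightarrow> (\<forall>k. k + p < length xs \<longrightarrow> xs ! k = xs ! (k + p))"

lemma has_period_iff_drop_eq_take:
  "has_period p xs \<longleftrightarrow> drop p xs = take (length xs - p) xs"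
  unfolding has_period_def list_eq_iff_nth_eq by (auto simp: add.commute)

lemma has_period_drop:
  assumes "has_period p xs"
  shows "has_period p (drop d xs)"
  using assms unfolding has_period_def by (simp add: add.assoc)

lemma has_period_nth_add_mult:
  assumes "has_period q xs" and "k + m * q < length xs"
  shows "xs ! k = xs ! (k + m * q)"
  using assms(2)
proof (induction m)
  case (Suc m)
  have "xs ! k = xs ! (k + m * q)" using Suc by simp
  also have "\<dots> = xs ! (k + m * q + q)"
    using assms(1) Suc.prems unfolding has_period_def by (simp add: add.assoc)
  finally show ?case by (simp add: ac_simps)
qed simp

lemma exists_congruent_in_interval:
  fixes a k q :: nat
  assumes "0 < q"
  obtains r where "a \<le> r" "r < a + q" "r mod q = k mod q"
proof
  define r where "r = a + (k + q * a - a) mod q"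
  show "a \<le> r" "r < a + q" using assms by (simp_all add: r_def)
  have "a \<le> q * a" using assms by (simp add: Suc_le_eq)
  then have "a + (k + q * a - a) = k + q * a" by linarith
  then show "r mod q = k mod q" unfolding r_def by (metis mod_add_right_eq mod_mult_self2)
qed

lemma has_period_nth_cong:
  assumes "has_period q xs" and "x < length xs" and "y < length xs"
    and "x mod q = y mod q"
  shows "xs ! x = xs ! y"
proof -
  have "xs ! x = xs ! (x mod q)"
    using has_period_nth_add_mult[OF assms(1), of "x mod q" "x div q"] assms(2) by simp
  moreover have "xs ! y = xs ! (y mod q)"
    using has_period_nth_add_mult[OF assms(1), of "y mod q" "y div q"] assms(3) by simp
  ultimately show ?thesis using assms(4) by simp
qed

lemma has_period_of_equal_windows:
  assumes per: "has_period q xs" and "0 < q" and "q \<le> m"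
    and fits: "a + p + m \<le> length xs"
    and windows: "take m (drop a xs) = take m (drop (a + p) xs)"
  shows "has_period p xs"
  unfolding has_period_def
proof (intro allI impI)
  fix k assume k: "k + p < length xs"
  obtain r where r: "a \<le> r" "r < a + q" "r mod q = k mod q"
    using exists_congruent_in_interval[OF \<open>0 < q\<close>] by blast
  have "take m (drop a xs) ! (r - a) = take m (drop (a + p) xs) ! (r - a)"
    using windows by simp
  then have "xs ! r = xs ! (r + p)"
    using r \<open>q \<le> m\<close> fits by (simp add: ac_simps)
  moreover have "xs ! k = xs ! r"
    using has_period_nth_cong[OF per, of k r] k r fits \<open>q \<le> m\<close> by simp
  moreover have "(k + p) mod q = (r + p) mod q"
    using r(3) by (metis mod_add_left_eq)
  then have "xs ! (k + p) = xs ! (r + p)"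
    using has_period_nth_cong[OF per, of "k + p" "r + p"] k r fits \<open>q \<le> m\<close> by simp
  ultimately show "xs ! k = xs ! (k + p)" by simp
qed

lemma has_period_take_append:
  assumes "has_period q xs" and "q \<le> length xs"
  shows "has_period q (take q xs @ xs)"
  unfolding has_period_def
proof (intro allI impI)
  fix k assume k: "k + q < length (take q xs @ xs)"
  show "(take q xs @ xs) ! k = (take q xs @ xs) ! (k + q)"
  proof (cases "k < q")
    case True then show ?thesis using assms(2) by (simp add: nth_append)
  next
    case False
    then have "xs ! (k - q) = xs ! (k - q + q)"
      using assms k unfolding has_period_def by simp
    then show ?thesis using False assms(2) by (simp add: nth_append)
  qed
qed

lemma has_period_drop_diff:
  assumes "has_period p xs" and "p \<le> d" and "d + p \<le> length xs"
  shows "drop (d - p) xs = take p (drop d xs) @ drop d xs"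
proof (rule nth_equalityI)
  fix t assume t: "t < length (drop (d - p) xs)"
  show "drop (d - p) xs ! t = (take p (drop d xs) @ drop d xs) ! t"
  proof (cases "t < p")
    case True
    then have "xs ! (d - p + t) = xs ! (d - p + t + p)"
      using assms unfolding has_period_def by simp
    then show ?thesis using True assms(2,3) by (simp add: nth_append)
  next
    case False then show ?thesis using t assms(2,3) by (simp add: nth_append)
  qed
qed (use assms in simp)

lemma factor_eq_take_drop: "1 \<le> i \<Longrightarrow> factor u i (i + m - 1) = take m (drop (i - 1) u)"
  unfolding factor_def by (simp add: Suc_diff_le)

lemma qpow_2: "qpow w q 2 = take q w @ w"
  by (simp add: qpow_def numeral_2_eq_2)

lemma valid_step_iff:
  "valid_step L w q \<longleftrightarrow>
     2 \<le> length w \<and> 1 \<le> q \<and> 2 * q \<le> length w \<and> has_period q w \<and> take q w @ w \<in> L"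
  unfolding valid_step_def Let_def factor_def has_period_iff_drop_eq_take qpow_2
  by (auto simp: Suc_diff_le)

lemma suffix_in_language:
  assumes "is_language A L" and "u @ v \<in> L" and "v \<noteq> []"
  shows "v \<in> L"
  using assms unfolding is_language_def by (metis append_Nil2)

lemma valid_step_of_equal_windows:
  assumes L: "is_language A L" and q: "valid_step L w q"
    and ij: "1 \<le> i" "i < j" "j \<le> q"
    and eq: "factor (qpow w q 2) i (i + length w - 1) = factor (qpow w q 2) j (j + length w - 1)"
  shows "valid_step L w (j - i)"
proof -
  define W where "W = take q w @ w"
  define p where "p = j - i"
  have q: "2 \<le> length w" "1 \<le> q" "2 * q \<le> length w" "has_period q w" "W \<in> L"
    using q unfolding valid_step_iff W_def by auto
  have p: "1 \<le> p" "p < q" using ij by (auto simp: p_def)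
  have "has_period p W"
  proof (rule has_period_of_equal_windows)
    show "has_period q W"
      using has_period_take_append[OF q(4)] q(3) by (simp add: W_def)
    have "1 \<le> j" "j - 1 = i - 1 + p" using ij by (auto simp: p_def)
    then show "take (length w) (drop (i - 1) W) = take (length w) (drop (i - 1 + p) W)"
      using eq factor_eq_take_drop[OF ij(1)] factor_eq_take_drop[of j]
      unfolding qpow_2 W_def[symmetric] by metis
  qed (use q ij in \<open>auto simp: W_def p_def\<close>)
  have W_drop: "drop q W = w" using q by (simp add: W_def)
  have "has_period p w" using has_period_drop[OF \<open>has_period p W\<close>, of q] W_drop by simp
  moreover have "take p w @ w \<in> L"
  proof -
    have "drop (q - p) W \<noteq> []" using p q(1,3) by (auto simp: W_def)
    then have "drop (q - p) W \<in> L"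
      using suffix_in_language[OF L, of "take (q - p) W"] \<open>W \<in> L\<close> by simp
    moreover have "drop (q - p) W = take p w @ w"
      using has_period_drop_diff[OF \<open>has_period p W\<close>, of q] p q W_drop by (simp add: W_def)
    ultimately show ?thesis by simp
  qed
  ultimately show ?thesis using p q unfolding valid_step_iff p_def by simp
qed

theorem mainTheorem12:
  fixes A :: "'a set" and L :: "'a list set" and w :: "'a list" and n q :: nat
  assumes "is_language A L"
    and "w \<in> lang_n L n"
    and "valid_step L w q"
  shows "(\<forall>i j. 1 \<le> i \<and> i < j \<and> j \<le> q \<and>
            factor (qpow w q 2) i (i + n - 1) = factor (qpow w q 2) j (j + n - 1)
            \<longrightarrow> valid_step L w (j - i))
       \<and> (minimal_step L w q \<longrightarrow>
            (\<forall>i j. 1 \<le> i \<and> i \<le> q \<and> 1 \<le> j \<and> j \<le> q \<and> i \<noteq> j \<longrightarrow>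
               factor (qpow w q 2) i (i + n - 1) \<noteq> factor (qpow w q 2) j (j + n - 1)))"
proof -
  have "length w = n" using assms(2) by (simp add: lang_n_def)
  then have steps: "valid_step L w (j - i)"
    if "1 \<le> i" "i < j" "j \<le> q"
      "factor (qpow w q 2) i (i + n - 1) = factor (qpow w q 2) j (j + n - 1)" for i j
    using valid_step_of_equal_windows[OF assms(1,3) that(1-3)] that(4) by blast
  have distinct: "factor (qpow w q 2) i (i + n - 1) \<noteq> factor (qpow w q 2) j (j + n - 1)"
    if "minimal_step L w q" "1 \<le> i" "i < j" "j \<le> q" for i j
  proof
    assume "factor (qpow w q 2) i (i + n - 1) = factor (qpow w q 2) j (j + n - 1)"
    then have "valid_step L w (j - i)" using steps that(2-4) by blast
    moreover have "j - i < q" using that(2-4) by simp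
    ultimately show False using that(1) unfolding minimal_step_def by blast
  qed
  show ?thesis
  proof (intro conjI impI allI)
    fix i j assume "minimal_step L w q" "1 \<le> i \<and> i \<le> q \<and> 1 \<le> j \<and> j \<le> q \<and> i \<noteq> j"
    then show "factor (qpow w q 2) i (i + n - 1) \<noteq> factor (qpow w q 2) j (j + n - 1)"
      using distinct[of i j] distinct[of j i] by (cases "i < j") auto
  qed (use steps in blast)
qed

end
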